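(* In the qubit–battery model, write (up to an irrelevant global phase) the target unitary as $V_{00}=\cos\theta$, $V_{01}=\sin\theta\,e^{i\gamma}$, $V_{10}=\sin\theta\,e^{i(\gamma+\varphi)}$, $V_{11}=-\cos\theta\,e^{i\varphi}$ with $\theta\in[0,\pi/2]$, $\gamma,\varphi\in\mathbb R$. Let $U_{SB}=|0\rangle\langle0|_S\otimes|0\rangle\langle0|_B+\sum_{n\ge1}\sum_{i,j}U^{(n)}_{ij}|i\rangle\langle j|_S\otimes|n-i\rangle\langle n-j|_B$ where, for a fixed $\bar\theta\in[0,\pi/2]$ and arbitrary real phases $\alpha_n,\gamma_n,\varphi_n$, $$U^{(n)}_{00}=\cos\bar\theta\,e^{i\alpha_n},\ U^{(n)}_{01}=\sin\bar\theta\,e^{i(\alpha_n+\gamma_n)},\ U^{(n)}_{10}=\sin\bar\theta\,e^{i(\alpha_n+\gamma_n+\varphi_n)},\ U^{(n)}_{11}=-\cos\bar\theta\,e^{i(\alpha_n+\varphi_n)}.$$ Then for every normalized battery state $|\beta\rangle_B=\sum_{n\ge1}\beta_n|n\rangle_B$ with $\beta_0=0$, $$\epsilon_C(\mathbf\Phi_{|\beta\rangle},\mathcal V)\ \ge\ \sin^2(\bar\theta-\theta)+\frac14\Big[\sin(2\bar\theta)\sin(2\theta)\,Q^{(1)}_\beta+\sin^2\bar\theta\,\sin^2\theta\,Q^{(2)}_\beta\Big],$$ where $Q^{(1)}_\beta=2-2\sum_{n\ge1}|\beta_n\beta_{n+1}|$ and $Q^{(2)}_\beta=2\big(1-\sum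_{n\ge1}|\beta_n\beta_{n+2}|\big)$.
   Context: Qubit–battery model: qubit $S$ with energy basis $|0\rangle,|1\rangle$, $H_S=\frac\omega2(|1\rangle\langle1|-|0\rangle\langle0|)$; oscillator $B$ with basis $\{|n\rangle\}_{n\ge0}$, $H_B=\omega\sum_n n|n\rangle\langle n|$. $V_{ij}=\langle i|V_S|j\rangle$, $\mathcal V(\cdot)=V_S\cdot V_S^\dagger$. Channel $\mathbf\Phi_{|\beta\rangle}(\rho)=\mathrm{Tr}_B[U_{SB}(\rho\otimes|\beta\rangle\langle\beta|)U_{SB}^\dagger]$, Kraus operators $K^{(n)}={}_B\langle n|U_{SB}|\beta\rangle_B$, Choi infidelity $\epsilon_C=1-\frac14\sum_n|\mathrm{Tr}[V_S^\dagger K^{(n)}]|^2$. *)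

theory Defs
  imports "HOL-Analysis.Analysis"
begin

(* Qubit basis |0>,|1> encoded as nat indices 0,1; battery basis |n>, n :: nat. *)

definition targetV :: "real \<Rightarrow> real \<Rightarrow> real \<Rightarrow> nat \<Rightarrow> nat \<Rightarrow> complex" where
  "targetV \<theta> \<gamma> \<phi> i j =
     (if i = 0 \<and> j = 0 then complex_of_real (cos \<theta>)
      else if i = 0 \<and> j = 1 then complex_of_real (sin \<theta>) * cis \<gamma>
      else if i = 1 \<and> j = 0 then complex_of_real (sin \<theta>) * cis (\<gamma> + \<phi>)
      else if i = 1 \<and> j = 1 then - complex_of_real (cos \<theta>) * cis \<phi>
      else 0)"

definition blockU :: "real \<Rightarrow> (nat \<Rightarrow> real) \<Rightarrow> (nat \<Rightarrow> real) \<Rightarrow> (nat \<Rightarrow> real)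
    \<Rightarrow> nat \<Rightarrow> nat \<Rightarrow> nat \<Rightarrow> complex" where
  "blockU tb \<alpha> g p n i j =
     (if i = 0 \<and> j = 0 then complex_of_real (cos tb) * cis (\<alpha> n)
      else if i = 0 \<and> j = 1 then complex_of_real (sin tb) * cis (\<alpha> n + g n)
      else if i = 1 \<and> j = 0 then complex_of_real (sin tb) * cis (\<alpha> n + g n + p n)
      else if i = 1 \<and> j = 1 then - complex_of_real (cos tb) * cis (\<alpha> n + p n)
      else 0)"

text \<open>Matrix element <i|_S <n|_B U_SB |j>_S |k>_B of
  U_SB = |0><0| (x) |0><0| + sum_{m>=1} sum_{i,j} U^(m)_ij |i><j| (x) |m-i><m-j|.
  The condition "n = m - i, k = m - j" is written n + i = m, k + j = m.\<close>
definition jointU :: "(nat \<Rightarrow> nat \<Rightarrow> nat \<Rightarrow> complex) \<Rightarrow> nat \<Rightarrow> nat \<Rightarrow> nat \<Rightarrow> nat \<Rightarrow> complex" where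
  "jointU Ublk i n j k =
     (if i = 0 \<and> j = 0 \<and> n = 0 \<and> k = 0 then 1 else 0)
     + (\<Sum>\<^sub>\<infinity>m\<in>{1..}. if n + i = m \<and> k + j = m then Ublk m i j else 0)"

text \<open>Kraus operator K^(n) = <n|_B U_SB |beta>_B, matrix elements K^(n)_ij.\<close>
definition kraus :: "(nat \<Rightarrow> nat \<Rightarrow> nat \<Rightarrow> nat \<Rightarrow> complex) \<Rightarrow> (nat \<Rightarrow> complex)
    \<Rightarrow> nat \<Rightarrow> nat \<Rightarrow> nat \<Rightarrow> complex" where
  "kraus USB \<beta> n i j = (\<Sum>\<^sub>\<infinity>k. USB i n j k * \<beta> k)"

definition tr_adj :: "(nat \<Rightarrow> nat \<Rightarrow> complex) \<Rightarrow> (nat \<Rightarrow> nat \<Rightarrow> complex) \<Rightarrow> complex" where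
  "tr_adj V K = (\<Sum>i\<in>{0,1}. \<Sum>j\<in>{0,1}. cnj (V i j) * K i j)"

definition choi_infid :: "(nat \<Rightarrow> nat \<Rightarrow> complex) \<Rightarrow> (nat \<Rightarrow> nat \<Rightarrow> nat \<Rightarrow> complex) \<Rightarrow> real" where
  "choi_infid V K = 1 - (1/4) * (\<Sum>\<^sub>\<infinity>n. (cmod (tr_adj V (K n)))^2)"

definition Q1 :: "(nat \<Rightarrow> complex) \<Rightarrow> real" where
  "Q1 \<beta> = 2 - 2 * (\<Sum>\<^sub>\<infinity>n\<in>{1..}. cmod (\<beta> n * \<beta> (n+1)))"

definition Q2 :: "(nat \<Rightarrow> complex) \<Rightarrow> real" where
  "Q2 \<beta> = 2 * (1 - (\<Sum>\<^sub>\<infinity>n\<in>{1..}. cmod (\<beta> n * \<beta> (n+2))))"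

end

theory Submission
  imports Defs
begin

text \<open>Since \<open>\<beta>_0 = 0\<close>, the vacuum term of \<open>U_SB\<close> never acts and the Kraus operators
  are \<open>K^(n)_ij = U^(n+i)_ij \<beta>_(n+i-j)\<close>. By the triangle inequality
  \<open>|Tr[V^* K^(n)]| \<le> a |\<beta>_n| + b (|\<beta>_(n-1)| + |\<beta>_(n+1)|)\<close> with \<open>a = 2 cos \<theta> cos tb\<close>
  and \<open>b = sin \<theta> sin tb\<close>: all phases disappear in the moduli. Squaring and summing,
  normalisation of \<open>\<beta>\<close> and the overlaps \<open>P_k = \<Sum>_n |\<beta>_n \<beta>_(n+k)|\<close> give
  \<open>\<Sum>_n |Tr[V^* K^(n)]|^2 \<le> a^2 + 4ab P_1 + b^2 (2 + 2 P_2)\<close>, and a trigonometric identity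
  turns \<open>1 - (a^2 + 4ab P_1 + b^2 (2 + 2 P_2)) / 4\<close> into the claimed bound.\<close>

lemma jointU_eq:
  "jointU U i n j k = (if i = 0 \<and> j = 0 \<and> n = 0 \<and> k = 0 then 1 else 0)
     + (if 1 \<le> n + i \<and> k + j = n + i then U (n + i) i j else 0)"
proof -
  have "(\<Sum>\<^sub>\<infinity>m\<in>{1..}. if n + i = m \<and> k + j = m then U m i j else 0)
        = (\<Sum>\<^sub>\<infinity>m\<in>(if 1 \<le> n + i then {n + i} else {}). if n + i = m \<and> k + j = m then U m i j else 0)"
    by (rule infsum_cong_neutral) (auto split: if_splits)
  then show ?thesis
    unfolding jointU_def by simp
qed

lemma kraus_jointU:
  assumes "\<beta> 0 = 0"
  shows "kraus (jointU U) \<beta> n i j = (if j \<le> n + i then U (n + i) i j * \<beta> (n + i - j) else 0)"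
proof -
  have "kraus (jointU U) \<beta> n i j = (\<Sum>\<^sub>\<infinity>k\<in>{n + i - j}. jointU U i n j k * \<beta> k)"
    unfolding kraus_def by (rule infsum_cong_neutral) (auto simp: jointU_eq assms)
  then show ?thesis
    using assms by (auto simp: jointU_eq)
qed

lemma norm_tr_adj_kraus_le:
  fixes \<theta> tb :: real
  assumes "0 \<le> \<theta>" "\<theta> \<le> pi/2" "0 \<le> tb" "tb \<le> pi/2" "\<beta> 0 = 0"
  shows "cmod (tr_adj (targetV \<theta> \<gamma> \<phi>) (kraus (jointU (blockU tb \<alpha> g p)) \<beta> n))
     \<le> 2 * cos \<theta> * cos tb * cmod (\<beta> n)
        + sin \<theta> * sin tb * (cmod (\<beta> (n - 1)) + cmod (\<beta> (n + 1)))"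
proof -
  have "cos \<theta> \<ge> 0" "cos tb \<ge> 0" "sin \<theta> \<ge> 0" "sin tb \<ge> 0"
    using assms by (auto intro!: cos_ge_zero sin_ge_zero)
  let ?K = "kraus (jointU (blockU tb \<alpha> g p)) \<beta> n"
  let ?V = "targetV \<theta> \<gamma> \<phi>"
  let ?t = "\<lambda>i j. cnj (?V i j) * ?K i j"
  have diag: "cmod (?t 0 0) = cos \<theta> * cos tb * cmod (\<beta> n)"
             "cmod (?t 1 1) = cos \<theta> * cos tb * cmod (\<beta> n)"
    and off_diag: "cmod (?t 0 1) \<le> sin \<theta> * sin tb * cmod (\<beta> (n - 1))"
                  "cmod (?t 1 0) = sin \<theta> * sin tb * cmod (\<beta> (n + 1))"
    using \<open>cos \<theta> \<ge> 0\<close> \<open>cos tb \<ge> 0\<close> \<open>sin \<theta> \<ge> 0\<close> \<open>sin tb \<ge> 0\<close>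
    by (simp_all add: kraus_jointU assms targetV_def blockU_def norm_mult)
  have "cmod (tr_adj ?V ?K) = cmod (?t 0 0 + ?t 0 1 + (?t 1 0 + ?t 1 1))"
    unfolding tr_adj_def by simp
  also have "\<dots> \<le> cmod (?t 0 0) + cmod (?t 0 1) + (cmod (?t 1 0) + cmod (?t 1 1))"
    by (meson add_mono norm_triangle_ineq order_trans)
  finally show ?thesis
    using diag off_diag by (simp add: algebra_simps)
qed

lemma summable_mult_shift:
  fixes y :: "nat \<Rightarrow> real"
  assumes "summable (\<lambda>n. (y n)\<^sup>2)"
  shows "summable (\<lambda>n. y n * y (n + k))"
proof (rule summable_comparison_test)
  have "summable (\<lambda>n. (y (n + k))\<^sup>2)"
    using assms by (rule summable_ignore_initial_segment)
  then show "summable (\<lambda>n. ((y n)\<^sup>2 + (y (n + k))\<^sup>2) / 2)"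
    using assms by (intro summable_divide summable_add)
  have "norm (y n * y (n + k)) \<le> ((y n)\<^sup>2 + (y (n + k))\<^sup>2) / 2" for n
    using sum_squares_bound[of "\<bar>y n\<bar>" "\<bar>y (n + k)\<bar>"] by (simp add: abs_mult)
  then show "\<exists>N. \<forall>n\<ge>N. norm (y n * y (n + k)) \<le> ((y n)\<^sup>2 + (y (n + k))\<^sup>2) / 2"
    by blast
qed

lemma sums_power2_tridiagonal:
  fixes y :: "nat \<Rightarrow> real"
  assumes "(\<lambda>n. (y n)\<^sup>2) sums S" "y 0 = 0"
  shows "(\<lambda>n. (a * y n + b * (y (n - 1) + y (n + 1)))\<^sup>2) sums
           (a\<^sup>2 * S + 4 * a * b * (\<Sum>n. y n * y (n + 1))
            + b\<^sup>2 * (2 * S + 2 * (\<Sum>n. y n * y (n + 2))))"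
proof -
  define P1 where "P1 = (\<Sum>n. y n * y (n + 1))"
  define P2 where "P2 = (\<Sum>n. y n * y (n + 2))"
  have summable_squares: "summable (\<lambda>n. (y n)\<^sup>2)"
    using assms(1) by (simp add: sums_iff)
  have P1_sums: "(\<lambda>n. y n * y (n + 1)) sums P1" and P2_sums: "(\<lambda>n. y n * y (n + 2)) sums P2"
    unfolding P1_def P2_def
    using summable_mult_shift[OF summable_squares, of 1] summable_mult_shift[OF summable_squares, of 2]
    by (simp_all add: summable_sums)
  have shifts_sum: "(\<lambda>n. (y (n + 1))\<^sup>2) sums S" "(\<lambda>n. (y (n - 1))\<^sup>2) sums S"
      "(\<lambda>n. y (n - 1) * y n) sums P1" "(\<lambda>n. y (n - 1) * y (n + 1)) sums P2"
    using assms(1) sums_Suc_iff[of "\<lambda>n. (y n)\<^sup>2"] sums_Suc_iff[of "\<lambda>n. (y (n - 1))\<^sup>2"]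
      P1_sums sums_Suc_iff[of "\<lambda>n. y (n - 1) * y n"]
      P2_sums sums_Suc_iff[of "\<lambda>n. y (n - 1) * y (n + 1)"] assms(2)
    by (simp_all add: numeral_2_eq_2)
  have expand: "(a * y n + b * (y (n - 1) + y (n + 1)))\<^sup>2
      = a\<^sup>2 * (y n)\<^sup>2 + (2 * a * b) * (y (n - 1) * y n + y n * y (n + 1))
        + b\<^sup>2 * ((y (n - 1))\<^sup>2 + (y (n + 1))\<^sup>2 + 2 * (y (n - 1) * y (n + 1)))" for n
    by (simp add: power2_eq_square algebra_simps)
  have "(\<lambda>n. (a * y n + b * (y (n - 1) + y (n + 1)))\<^sup>2) sums
          (a\<^sup>2 * S + (2 * a * b) * (P1 + P1) + b\<^sup>2 * (S + S + 2 * P2))"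
    unfolding expand by (intro sums_add sums_mult sums_mult2 assms(1) shifts_sum P1_sums P2_sums)
  then show ?thesis
    unfolding P1_def [symmetric] P2_def [symmetric] by (simp add: algebra_simps)
qed

lemma infsum_atLeast_1_eq_suminf:
  fixes f :: "nat \<Rightarrow> real"
  assumes "summable f" "\<And>n. f n \<ge> 0" "f 0 = 0"
  shows "(\<Sum>\<^sub>\<infinity>n\<in>{1..}. f n) = (\<Sum>n. f n)"
proof -
  have "(\<Sum>\<^sub>\<infinity>n\<in>{1..}. f n) = (\<Sum>\<^sub>\<infinity>n. f n)"
    by (rule infsum_cong_neutral) (use assms(3) not_less_eq_eq in auto)
  also have "\<dots> = (\<Sum>n. f n)"
    using assms by (intro infsumI sums_nonneg_imp_has_sum) (auto simp: summable_sums)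
  finally show ?thesis .
qed

lemma choi_infid_ge_of_norm_le:
  assumes "\<And>n. cmod (tr_adj V (K n)) \<le> h n" "(\<lambda>n. (h n)\<^sup>2) sums s"
  shows "choi_infid V K \<ge> 1 - s / 4"
proof -
  define T where "T n = (cmod (tr_adj V (K n)))\<^sup>2" for n
  have T_le: "T n \<le> (h n)\<^sup>2" for n
    unfolding T_def using assms(1)[of n] by (intro power_mono) auto
  have T_nonneg: "T n \<ge> 0" for n
    by (simp add: T_def)
  have h_summable: "summable (\<lambda>n. (h n)\<^sup>2)"
    using assms(2) by (simp add: sums_iff)
  then have "summable T"
    by (rule summable_comparison_test'[where N = 0]) (simp add: T_le T_nonneg)
  then have "(\<Sum>\<^sub>\<infinity>n. T n) = (\<Sum>n. T n)"
    using T_nonneg by (intro infsumI sums_nonneg_imp_has_sum) (auto simp: summable_sums)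
  also have "\<dots> \<le> (\<Sum>n. (h n)\<^sup>2)"
    using T_le \<open>summable T\<close> h_summable by (rule suminf_le)
  also have "\<dots> = s"
    using assms(2) by (rule sums_unique[symmetric])
  finally show ?thesis
    unfolding choi_infid_def T_def by simp
qed

lemma infidelity_bound_trig_identity:
  fixes \<theta> tb P1 P2 :: real
  shows "1 - ((2 * cos \<theta> * cos tb)\<^sup>2 + 4 * (2 * cos \<theta> * cos tb) * (sin \<theta> * sin tb) * P1
             + (sin \<theta> * sin tb)\<^sup>2 * (2 + 2 * P2)) / 4
       = (sin (tb - \<theta>))\<^sup>2 + (1/4) * (sin (2*tb) * sin (2*\<theta>) * (2 - 2 * P1)
              + (sin tb)\<^sup>2 * (sin \<theta>)\<^sup>2 * (2 * (1 - P2)))"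
proof -
  have "(sin \<theta>)\<^sup>2 + (cos \<theta>)\<^sup>2 = 1" "(sin tb)\<^sup>2 + (cos tb)\<^sup>2 = 1"
    by simp_all
  then show ?thesis
    unfolding sin_diff sin_double by algebra
qed

theorem mainTheorem4:
  fixes \<theta> \<gamma> \<phi> tb :: real
    and \<alpha> g p :: "nat \<Rightarrow> real"
    and \<beta> :: "nat \<Rightarrow> complex"
  assumes "0 \<le> \<theta>" "\<theta> \<le> pi/2"
    and "0 \<le> tb" "tb \<le> pi/2"
    and "((\<lambda>n. (cmod (\<beta> n))^2) has_sum 1) UNIV"
    and "\<beta> 0 = 0"
  shows "choi_infid (targetV \<theta> \<gamma> \<phi>) (kraus (jointU (blockU tb \<alpha> g p)) \<beta>)
         \<ge> (sin (tb - \<theta>))^2 + (1/4) * (sin (2*tb) * sin (2*\<theta>) * Q1 \<beta>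
              + (sin tb)^2 * (sin \<theta>)^2 * Q2 \<beta>)"
proof -
  define y where "y n = cmod (\<beta> n)" for n
  define P1 where "P1 = (\<Sum>n. y n * y (n + 1))"
  define P2 where "P2 = (\<Sum>n. y n * y (n + 2))"
  have y_sums: "(\<lambda>n. (y n)\<^sup>2) sums 1"
    using has_sum_imp_sums[OF assms(5)] by (simp add: y_def)
  have y_summable: "summable (\<lambda>n. (y n)\<^sup>2)"
    using y_sums by (simp add: sums_iff)
  have overlap_eq: "(\<Sum>\<^sub>\<infinity>n\<in>{1..}. y n * y (n + k)) = (\<Sum>n. y n * y (n + k))" for k
    using summable_mult_shift[OF y_summable] assms(6)
    by (intro infsum_atLeast_1_eq_suminf) (simp_all add: y_def)
  have Q_eq: "Q1 \<beta> = 2 - 2 * P1" "Q2 \<beta> = 2 * (1 - P2)"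
    using overlap_eq[of 1] overlap_eq[of 2]
    by (simp_all add: Q1_def Q2_def P1_def P2_def y_def norm_mult)
  have "choi_infid (targetV \<theta> \<gamma> \<phi>) (kraus (jointU (blockU tb \<alpha> g p)) \<beta>)
      \<ge> 1 - ((2 * cos \<theta> * cos tb)\<^sup>2 + 4 * (2 * cos \<theta> * cos tb) * (sin \<theta> * sin tb) * P1
             + (sin \<theta> * sin tb)\<^sup>2 * (2 + 2 * P2)) / 4"
    using norm_tr_adj_kraus_le[where \<beta> = \<beta>, OF assms(1-4,6)]
      sums_power2_tridiagonal[OF y_sums, of "2 * cos \<theta> * cos tb" "sin \<theta> * sin tb"] assms(6)
    unfolding P1_def P2_def y_def by (intro choi_infid_ge_of_norm_le) (simp_all add: power_mult_distrib)
  then show ?thesis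
    unfolding Q_eq infidelity_bound_trig_identity[symmetric] .
qed

end
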